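(* Let $x>1$ be an irrational real number with continued fraction expansion $x=[a_1,a_2,\ldots]$ (all $a_i\in\mathbb{Z}_{\geq1}$) and convergents $x_n=[a_1,\ldots,a_n]$. Let $m\geq2$ be even, so that $x_{m-1}<x_m$, and put $a=a_1+\cdots+a_m-1$. Then for every rational number $r/s$ with $x_{m-1}<r/s<x_m$, the coefficients of $q^j$ for $0\leq j\leq a-1$ in the Taylor series at $q=0$ of $[r/s]_q$ coincide with the corresponding coefficients of $[x_{m-1}]_q$ and of $[x_m]_q$.
   Context: For an integer $a\geq1$ put $[a]_q=1+q+\cdots+q^{a-1}$ and $[a]_{q^{-1}}=1+q^{-1}+\cdots+q^{-(a-1)}$. Every rational number $r/s>1$ has a unique expansion as a regular continued fraction of even length, $$r/s=[a_1,\ldots,a_{2m}]=a_1+\cfrac{1}{a_2+\cfrac{1}{\ddots+\cfrac{1}{a_{2m}}}},$$ with all $a_i\in\mathbb{Z}_{\geq1}$. Its $q$-deformation is the rational function $$\left[\tfrac{r}{s}\right]_q=[a_1]_q+\cfrac{q^{a_1}}{[a_2]_{q^{-1}}+\cfrac{q^{-a_2}}{[a_3]_q+\cfrac{q^{a_3}}{[a_4]_{q^{-1}}+\cfrac{q^{-a_4}}{\ddots+\cfrac{q^{a_{2m-1}}}{[a_{2m}]_{q^{-1}}}}}}}.$$ One also sets $[1]_q=1$. Each $[r/s]_q$ is a quotient of polynomials with nonnegative integer coefficients, each having constant term $1$, and is identified with its Taylor expansion at $q=0$. Convergents are deformed using their own even-length expansions. *)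

theory Defs
  imports Complex_Main "HOL-Computational_Algebra.Formal_Laurent_Series"
begin

fun cf_val :: "nat list \<Rightarrow> rat" where
  "cf_val [] = 0"
| "cf_val [a] = of_nat a"
| "cf_val (a # b # as) = of_nat a + 1 / cf_val (b # as)"

text \<open>q-integers [a]_q (flag True) and [a]_{q^{-1}} (flag False), as Laurent series in q.\<close>
definition qint :: "bool \<Rightarrow> nat \<Rightarrow> rat fls" where
  "qint b a = (\<Sum>i<a. (if b then fls_X else fls_X_inv) ^ i)"

definition qpow :: "bool \<Rightarrow> nat \<Rightarrow> rat fls" where
  "qpow b a = (if b then fls_X else fls_X_inv) ^ a"

text \<open>The q-deformed continued fraction; the flag records whether the current
level uses q (True) or q^{-1} (False).\<close>
fun qcf :: "bool \<Rightarrow> nat list \<Rightarrow> rat fls" where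
  "qcf b [] = 0"
| "qcf b [a] = qint b a"
| "qcf b (a # c # as) = qint b a + qpow b a / qcf (\<not> b) (c # as)"

text \<open>[x]_q for a rational x: [1]_q = 1; for x > 1 use the unique even-length expansion.\<close>
definition qrat :: "rat \<Rightarrow> rat fls" where
  "qrat x = (if x = 1 then 1 else
     qcf True (THE as. as \<noteq> [] \<and> even (length as) \<and> (\<forall>c\<in>set as. c \<ge> 1) \<and> cf_val as = x))"

text \<open>n-th convergent [a_1,...,a_n] of a sequence indexed from 1.\<close>
definition conv :: "(nat \<Rightarrow> nat) \<Rightarrow> nat \<Rightarrow> rat" where
  "conv a n = cf_val (map a [1..<n+1])"

end

theory Submission
  imports Defs
begin

(*
  Write the convergents as x_(m-1) = [p, b] and x_m = [p, b, c] with p of even length.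
  A rational y strictly between them is [p, b, t] for a rational t > c, and expanding t
  gives y = [p, b, c1, c2, ...] with c1 = floor t >= c.  On the q-side,
  [b, c1, ...]_q - [b]_q = q^b / [c1, ...]_(q^-1) has order at least b + c1 - 1.
  Feeding two series that agree to order k through one level U |-> h + P / U yields
  series agreeing to order k + v(P) - v(U) - v(U'), since P/U - P/U' = P (U' - U) / (U U');
  a pair of levels of p with entries a, a' has valuations 0 and -a' and so raises the
  order by a + a'.  Hence [y]_q and [x_m]_q both agree with [x_(m-1)]_q below
  a_1 + ... + a_m - 1.
*)

section \<open>Agreement of Laurent series below an order\<close>

definition fls_agree_below :: "'a::group_add fls \<Rightarrow> 'a fls \<Rightarrow> int \<Rightarrow> bool" where
  "fls_agree_below f g k \<longleftrightarrow> (\<forall>j<k. fls_nth f j = fls_nth g j)"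

lemma fls_agree_below_iff_subdegree:
  "fls_agree_below f g k \<longleftrightarrow> f = g \<or> k \<le> fls_subdegree (f - g)"
proof (cases "f = g")
  case False
  then have "f - g \<noteq> 0" by simp
  then have "(\<forall>j<k. fls_nth (f - g) j = 0) \<longleftrightarrow> k \<le> fls_subdegree (f - g)"
    using fls_subdegree_geI[of "f - g" k] fls_eq0_below_subdegree[of _ "f - g"]
    by (meson order_less_le_trans)
  then show ?thesis
    using False by (simp add: fls_agree_below_def)
qed (simp add: fls_agree_below_def)

lemma fls_agree_below_mono: "fls_agree_below f g k \<Longrightarrow> k' \<le> k \<Longrightarrow> fls_agree_below f g k'"
  unfolding fls_agree_below_def by auto

lemma fls_agree_below_add_divide:
  fixes h P Z Z' :: "'a::field fls"
  assumes "P \<noteq> 0" "Z \<noteq> 0" "Z' \<noteq> 0" "fls_agree_below Z Z' k"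
  shows "fls_agree_below (h + P / Z) (h + P / Z')
           (k + fls_subdegree P - fls_subdegree Z - fls_subdegree Z')"
proof (cases "Z = Z'")
  case False
  have "(h + P / Z) - (h + P / Z') = P * (Z' - Z) / (Z * Z')"
    using assms(2,3) by (simp add: field_simps)
  then have "fls_subdegree ((h + P / Z) - (h + P / Z'))
      = fls_subdegree P + fls_subdegree (Z' - Z) - fls_subdegree Z - fls_subdegree Z'"
    using False assms(1-3) by (simp add: fls_divide_subdegree)
  moreover have "k \<le> fls_subdegree (Z' - Z)"
    using False assms(4) fls_subdegree_minus_sym[of Z' Z]
    by (simp add: fls_agree_below_iff_subdegree)
  ultimately show ?thesis
    unfolding fls_agree_below_iff_subdegree by linarith
qed (simp add: fls_agree_below_def)

lemma fls_subdegree_add_dominant: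
  fixes f g :: "'a::group_add fls"
  assumes "f \<noteq> 0" "fls_subdegree f < fls_subdegree g"
  shows "f + g \<noteq> 0" "fls_subdegree (f + g) = fls_subdegree f"
proof -
  have "fls_nth (f + g) (fls_subdegree f) \<noteq> 0"
    using assms by simp
  then show "f + g \<noteq> 0" by (metis fls_nonzeroI)
  show "fls_subdegree (f + g) = fls_subdegree f"
    using fls_subdegree_add_eq1[OF assms] .
qed

section \<open>Regular continued fractions\<close>

lemma cf_val_Cons: "ys \<noteq> [] \<Longrightarrow> cf_val (x # ys) = of_nat x + 1 / cf_val ys"
  by (cases ys) auto

lemma cf_val_ge_1: "l \<noteq> [] \<Longrightarrow> \<forall>c\<in>set l. c \<ge> 1 \<Longrightarrow> cf_val l \<ge> 1"
proof (induction l rule: induct_list012)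
  case (3 x y zs)
  then have "cf_val (y # zs) \<ge> 1" "of_nat x \<ge> (1::rat)" by auto
  then show ?case
    by (simp add: cf_val_Cons add_increasing2)
qed auto

lemma nat_plus_inverse_inj:
  fixes u v :: rat
  assumes "u \<ge> 1" "v \<ge> 1" "of_nat a + 1 / u = of_nat b + 1 / v"
  shows "a = b" "u = v"
proof -
  have "0 < 1 / u" "1 / u \<le> 1" "0 < 1 / v" "1 / v \<le> 1"
    using assms(1,2) by auto
  then have "of_nat a < (of_nat (Suc b) :: rat)" "of_nat b < (of_nat (Suc a) :: rat)"
    unfolding of_nat_Suc using assms(3) by linarith+
  then show "a = b"
    by (simp only: of_nat_less_iff)
  then show "u = v"
    using assms by simp
qed

lemma cf_val_eq_1: "l \<noteq> [] \<Longrightarrow> \<forall>c\<in>set l. c \<ge> 1 \<Longrightarrow> cf_val l = 1 \<Longrightarrow> l = [1]"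
proof (induction l rule: induct_list012)
  case (3 x y zs)
  then have "cf_val (y # zs) \<ge> 1" "of_nat x \<ge> (1::rat)"
    using cf_val_ge_1[of "y # zs"] by auto
  moreover have "1 / cf_val (y # zs) > 0"
    using calculation by simp
  ultimately have "cf_val (x # y # zs) > 1"
    by (simp only: cf_val.simps(3))
  with "3.prems" show ?case by simp
qed auto

lemma cf_val_Cons_eq_singleton:
  assumes "ys \<noteq> []" "\<forall>c\<in>set ys. c \<ge> 1" "cf_val (y # ys) = of_nat x"
  shows "ys = [1]"
proof -
  have ys: "cf_val ys \<ge> 1"
    using cf_val_ge_1 assms(1,2) by blast
  have x: "of_nat x = of_nat y + 1 / cf_val ys"
    using assms(1,3) cf_val_Cons[of ys y] by simp
  moreover have "1 / cf_val ys > 0"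
    using ys by simp
  ultimately have "x \<ge> 1"
    by (metis add_nonneg_pos less_one not_le of_nat_0 of_nat_0_le_iff order_less_irrefl)
  then have "of_nat y + 1 / cf_val ys = of_nat (x - 1) + 1 / (1::rat)"
    using x by (simp add: of_nat_diff)
  then have "cf_val ys = 1"
    using nat_plus_inverse_inj(2)[OF ys] by simp
  then show ?thesis
    using cf_val_eq_1 assms(1,2) by blast
qed

lemma cf_val_inj:
  assumes "l1 \<noteq> []" "l2 \<noteq> []" "\<forall>c\<in>set l1. c \<ge> 1" "\<forall>c\<in>set l2. c \<ge> 1"
    and "even (length l1) \<longleftrightarrow> even (length l2)" "cf_val l1 = cf_val l2"
  shows "l1 = l2"
  using assms
proof (induction l1 arbitrary: l2)
  case (Cons x xs)
  obtain y ys where l2: "l2 = y # ys"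
    using Cons.prems(2) by (cases l2) auto
  consider "xs = []" "ys = []" | "xs = []" "ys \<noteq> []" | "xs \<noteq> []" "ys = []"
    | "xs \<noteq> []" "ys \<noteq> []" by blast
  then show ?case
  proof cases
    case 2
    \<comment> \<open>[x] = [x - 1, 1] is the only ambiguity; the parity hypothesis excludes it.\<close>
    then have "ys = [1]"
      using cf_val_Cons_eq_singleton[of ys y x] Cons.prems l2 by auto
    then show ?thesis
      using Cons.prems(5) 2 l2 by simp
  next
    case 3
    then have "xs = [1]"
      using cf_val_Cons_eq_singleton[of xs x y] Cons.prems l2 by auto
    then show ?thesis
      using Cons.prems(5) 3 l2 by simp
  next
    case 4
    have "cf_val xs \<ge> 1" "cf_val ys \<ge> 1"
      using cf_val_ge_1 4 Cons.prems l2 by auto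
    moreover have "of_nat x + 1 / cf_val xs = of_nat y + 1 / cf_val ys"
      using Cons.prems(6) l2 cf_val_Cons 4 by simp
    ultimately have "x = y" "cf_val xs = cf_val ys"
      using nat_plus_inverse_inj by blast+
    moreover have "xs = ys"
      using Cons.IH[of ys] 4 Cons.prems l2 calculation by auto
    ultimately show ?thesis
      using l2 by simp
  qed (use Cons.prems l2 in simp)
qed simp

lemma cf_val_snoc_1: "cf_val (l @ [c, 1]) = cf_val (l @ [c + 1])"
  by (induction l rule: induct_list012) (simp_all add: cf_val_Cons)

fun cf_with_tail :: "nat list \<Rightarrow> rat \<Rightarrow> rat" where
  "cf_with_tail [] t = t"
| "cf_with_tail (c # cs) t = of_nat c + 1 / cf_with_tail cs t"

lemma cf_val_append: "cs \<noteq> [] \<Longrightarrow> cf_val (pre @ cs) = cf_with_tail pre (cf_val cs)"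
  by (induction pre) (simp_all add: cf_val_Cons)

lemma cf_with_tail_pos: "t > 0 \<Longrightarrow> cf_with_tail pre t > 0"
  by (induction pre) (simp_all add: add_nonneg_pos)

lemma inverse_strictly_between:
  fixes u v w :: "'a::linordered_field"
  assumes "0 < u" "0 < v" "min (1 / u) (1 / v) < w" "w < max (1 / u) (1 / v)"
  shows "0 < w" "min u v < 1 / w" "1 / w < max u v"
proof -
  have "0 < min (1 / u) (1 / v)"
    using assms(1,2) by simp
  then show "0 < w"
    using assms(3) by linarith
  have flip: "a < 1 / w \<longleftrightarrow> w < 1 / a" "1 / w < a \<longleftrightarrow> 1 / a < w" if "0 < a" for a
    using that \<open>0 < w\<close> by (simp_all add: field_simps)
  have "1 / u \<le> 1 / v \<longleftrightarrow> v \<le> u"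
    using assms(1,2) by (simp add: field_simps)
  then show "min u v < 1 / w" "1 / w < max u v"
    using assms(3,4) flip[OF assms(1)] flip[OF assms(2)] by (auto simp: min_def max_def)
qed

lemma between_cf_with_tail:
  assumes "pre \<noteq> []" "\<forall>c\<in>set pre. c \<ge> 1" "A > 0"
    and "min (cf_val pre) (cf_with_tail pre A) < y" "y < max (cf_val pre) (cf_with_tail pre A)"
  shows "\<exists>t>A. y = cf_with_tail pre t"
  using assms
proof (induction pre arbitrary: y)
  case (Cons c pre)
  show ?case
  proof (cases "pre = []")
    case True
    have "of_nat c \<le> of_nat c + 1 / A"
      using \<open>A > 0\<close> by simp
    with Cons.prems(4,5) True have "0 < y - of_nat c" "y - of_nat c < 1 / A"
      by (simp_all add: min_absorb1 max_absorb2)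
    then have "A < 1 / (y - of_nat c)"
      using \<open>A > 0\<close> by (simp add: less_divide_eq mult.commute)
    moreover have "y = cf_with_tail [c] (1 / (y - of_nat c))"
      by simp
    ultimately show ?thesis
      using True by blast
  next
    case False
    let ?u = "cf_val pre" and ?v = "cf_with_tail pre A"
    have "?u \<ge> 1"
      using cf_val_ge_1[OF False] Cons.prems(2) by simp
    moreover have "?v > 0"
      using cf_with_tail_pos[OF \<open>A > 0\<close>] .
    moreover have "min (1 / ?u) (1 / ?v) < y - of_nat c" "y - of_nat c < max (1 / ?u) (1 / ?v)"
      using Cons.prems(4,5) min_add_distrib_right[of "of_nat c" "1 / ?u" "1 / ?v"]
        max_add_distrib_right[of "of_nat c" "1 / ?u" "1 / ?v"]
      by (simp_all add: cf_val_Cons[OF False])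
    ultimately have w: "0 < y - of_nat c"
      "min ?u ?v < 1 / (y - of_nat c)" "1 / (y - of_nat c) < max ?u ?v"
      using inverse_strictly_between[of ?u ?v "y - of_nat c"] by simp_all
    then obtain t where "t > A" "1 / (y - of_nat c) = cf_with_tail pre t"
      using Cons.IH[OF False] Cons.prems(2,3) by auto
    then have "y = cf_with_tail (c # pre) t"
      using w(1) by (simp flip: \<open>1 / (y - of_nat c) = cf_with_tail pre t\<close>)
    with \<open>t > A\<close> show ?thesis by blast
  qed
qed simp

lemma cf_val_exists_nat:
  "0 < q \<Longrightarrow> q \<le> p \<Longrightarrow> \<exists>cs. cs \<noteq> [] \<and> (\<forall>c\<in>set cs. c \<ge> 1) \<and>
     cf_val cs = of_nat p / of_nat q \<and> hd cs = p div q"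
proof (induction q arbitrary: p rule: less_induct)
  case (less q)
  have head: "p div q \<ge> 1"
    using less.prems by (simp add: Suc_le_eq div_greater_zero_iff)
  have euclid: "of_nat p = of_nat (p div q) * of_nat q + (of_nat (p mod q) :: rat)"
    by (metis of_nat_add of_nat_mult div_mult_mod_eq)
  show ?case
  proof (cases "p mod q = 0")
    case True
    then have "cf_val [p div q] = of_nat p / of_nat q"
      using euclid less.prems by simp
    then show ?thesis
      using head by (intro exI[of _ "[p div q]"]) auto
  next
    case False
    then obtain cs where cs: "cs \<noteq> []" "\<forall>c\<in>set cs. c \<ge> 1" "cf_val cs = of_nat q / of_nat (p mod q)"
      using less.IH[of "p mod q" q] less.prems by auto
    have "cf_val (p div q # cs) = of_nat (p div q) + of_nat (p mod q) / of_nat q"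
      using cs by (simp add: cf_val_Cons)
    also have "\<dots> = of_nat p / of_nat q"
      using euclid less.prems by (simp add: field_simps)
    finally show ?thesis
      using cs head by (intro exI[of _ "p div q # cs"]) auto
  qed
qed

lemma cf_val_exists:
  fixes t :: rat
  assumes "t \<ge> 1"
  shows "\<exists>cs. cs \<noteq> [] \<and> (\<forall>c\<in>set cs. c \<ge> 1) \<and> cf_val cs = t \<and> hd cs = nat \<lfloor>t\<rfloor>"
proof -
  obtain n d where nd: "quotient_of t = (n, d)"
    by (cases "quotient_of t")
  then have t: "t = of_int n / of_int d" and "d > 0"
    using quotient_of_div quotient_of_denom_pos by blast+
  then have "n > 0"
    using assms by (simp add: zero_less_divide_iff order_less_le_trans[OF zero_less_one])
  define p q where "p = nat n" and "q = nat d"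
  have tpq: "t = of_nat p / of_nat q" and "q > 0"
    unfolding p_def q_def using t \<open>n > 0\<close> \<open>d > 0\<close> by simp_all
  then have "q \<le> p"
    using assms by (simp add: le_divide_eq_1)
  with cf_val_exists_nat[OF \<open>q > 0\<close>] show ?thesis
    unfolding tpq floor_divide_of_nat_eq by simp
qed

section \<open>Orders of q-deformed continued fractions\<close>

lemma qint_True_subdegree:
  assumes "c \<ge> 1" shows "qint True c \<noteq> 0" "fls_subdegree (qint True c) = 0"
proof -
  have "fls_nth (qint True c) 0 = 1"
    using assms by (simp add: qint_def fls_nth_sum)
  moreover have "\<And>k. k < 0 \<Longrightarrow> fls_nth (qint True c) k = 0"
    by (simp add: qint_def fls_nth_sum)
  ultimately show "qint True c \<noteq> 0" "fls_subdegree (qint True c) = 0"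
    by (auto intro: fls_nonzeroI fls_subdegree_eqI)
qed

lemma qint_False_subdegree:
  assumes "d \<ge> 1" shows "qint False d \<noteq> 0" "fls_subdegree (qint False d) = 1 - int d"
proof -
  have "fls_nth (qint False d) (1 - int d) = (\<Sum>i<d. if i = d - 1 then 1 else 0)"
    unfolding qint_def fls_nth_sum fls_X_inv_power_nth using assms by (intro sum.cong) auto
  then have "fls_nth (qint False d) (1 - int d) = 1"
    using assms by simp
  moreover have "\<And>k. k < 1 - int d \<Longrightarrow> fls_nth (qint False d) k = 0"
    by (auto simp: qint_def fls_nth_sum)
  ultimately show "qint False d \<noteq> 0" "fls_subdegree (qint False d) = 1 - int d"
    by (auto intro: fls_nonzeroI fls_subdegree_eqI)
qed

lemma qpow_subdegree:
  "qpow b c \<noteq> 0" "fls_subdegree (qpow b c) = (if b then int c else - int c)"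
  by (simp_all add: qpow_def)

lemma qcf_level_False_subdegree:
  assumes "d \<ge> 1" "W \<noteq> 0" "fls_subdegree W = 0"
  shows "qint False d + qpow False d / W \<noteq> 0"
    "fls_subdegree (qint False d + qpow False d / W) = - int d"
proof -
  have "qpow False d / W \<noteq> 0" "fls_subdegree (qpow False d / W) = - int d"
    using assms by (simp_all add: qpow_subdegree fls_divide_subdegree)
  then show "qint False d + qpow False d / W \<noteq> 0"
    "fls_subdegree (qint False d + qpow False d / W) = - int d"
    using fls_subdegree_add_dominant[of "qpow False d / W" "qint False d"]
      qint_False_subdegree[OF assms(1)] by (simp_all add: add.commute)
qed

lemma qcf_level_True_subdegree:
  assumes "c \<ge> 1" "Z \<noteq> 0" "fls_subdegree Z \<le> 0"
  shows "qint True c + qpow True c / Z \<noteq> 0"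
    "fls_subdegree (qint True c + qpow True c / Z) = 0"
  using fls_subdegree_add_dominant[of "qint True c" "qpow True c / Z"] assms
    qint_True_subdegree[OF assms(1)]
  by (simp_all add: qpow_subdegree fls_divide_subdegree)

lemma qcf_subdegree:
  assumes "l \<noteq> []" "\<forall>c\<in>set l. c \<ge> 1"
  shows "qcf b l \<noteq> 0 \<and>
    (if b then fls_subdegree (qcf b l) = 0 else fls_subdegree (qcf b l) \<le> 1 - int (hd l))"
  using assms
proof (induction b l rule: qcf.induct)
  case (2 b a)
  then show ?case using qint_True_subdegree qint_False_subdegree by (cases b) auto
next
  case (3 b a c as)
  have a: "a \<ge> 1" and c: "c \<ge> 1" using "3.prems" by auto
  show ?case
  proof (cases b)
    case True
    with 3 have "qcf False (c # as) \<noteq> 0" "fls_subdegree (qcf False (c # as)) \<le> 0"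
      using c by auto
    with qcf_level_True_subdegree[OF a] show ?thesis
      using True by simp
  next
    case False
    with 3 have "qcf True (c # as) \<noteq> 0" "fls_subdegree (qcf True (c # as)) = 0"
      by auto
    with qcf_level_False_subdegree[OF a] show ?thesis
      using False by simp
  qed
qed simp

fun qcf_with_tail :: "bool \<Rightarrow> nat list \<Rightarrow> rat fls \<Rightarrow> rat fls" where
  "qcf_with_tail b [] U = U"
| "qcf_with_tail b (c # cs) U = qint b c + qpow b c / qcf_with_tail (\<not> b) cs U"

lemma qcf_append:
  "l \<noteq> [] \<Longrightarrow> qcf b (pre @ l) = qcf_with_tail b pre (qcf (if even (length pre) then b else \<not> b) l)"
proof (induction pre arbitrary: b)
  case (Cons c pre)
  obtain x xs where "pre @ l = x # xs"
    using Cons.prems by (cases "pre @ l") auto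
  then show ?case
    using Cons by simp
qed simp

lemma qcf_with_tail_subdegree:
  assumes "even (length pre)" "\<forall>c\<in>set pre. c \<ge> 1" "U \<noteq> 0" "fls_subdegree U = 0"
  shows "qcf_with_tail True pre U \<noteq> 0 \<and> fls_subdegree (qcf_with_tail True pre U) = 0"
  using assms
proof (induction pre rule: induct_list012)
  case (3 c d rest)
  let ?Z = "qint False d + qpow False d / qcf_with_tail True rest U"
  have "c \<ge> 1" "d \<ge> 1" using "3.prems" by auto
  with 3 have "?Z \<noteq> 0" "fls_subdegree ?Z = - int d"
    using qcf_level_False_subdegree by auto
  with qcf_level_True_subdegree[OF \<open>c \<ge> 1\<close>] show ?case
    by simp
qed auto

lemma qcf_with_tail_agree:
  assumes "even (length pre)" "\<forall>c\<in>set pre. c \<ge> 1"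
    and "U \<noteq> 0" "fls_subdegree U = 0" "U' \<noteq> 0" "fls_subdegree U' = 0"
    and "fls_agree_below U U' k"
  shows "fls_agree_below (qcf_with_tail True pre U) (qcf_with_tail True pre U') (k + int (sum_list pre))"
  using assms
proof (induction pre arbitrary: k rule: induct_list012)
  case (3 c d rest)
  let ?W = "qcf_with_tail True rest U" and ?W' = "qcf_with_tail True rest U'"
  let ?Z = "qint False d + qpow False d / ?W" and ?Z' = "qint False d + qpow False d / ?W'"
  have "c \<ge> 1" "d \<ge> 1" using "3.prems" by auto
  have W: "?W \<noteq> 0" "fls_subdegree ?W = 0" "?W' \<noteq> 0" "fls_subdegree ?W' = 0"
    using "3.prems" qcf_with_tail_subdegree[of rest] by auto
  then have Z: "?Z \<noteq> 0" "fls_subdegree ?Z = - int d" "?Z' \<noteq> 0" "fls_subdegree ?Z' = - int d"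
    using qcf_level_False_subdegree[OF \<open>d \<ge> 1\<close>] by auto
  have "fls_agree_below ?W ?W' (k + int (sum_list rest))"
    using 3 by auto
  then have "fls_agree_below ?Z ?Z'
      (k + int (sum_list rest) + fls_subdegree (qpow False d) - fls_subdegree ?W - fls_subdegree ?W')"
    by (rule fls_agree_below_add_divide[OF qpow_subdegree(1) W(1,3)])
  then have "fls_agree_below ?Z ?Z' (k + int (sum_list rest) - int d)"
    using W by (simp add: qpow_subdegree)
  then have "fls_agree_below (qint True c + qpow True c / ?Z) (qint True c + qpow True c / ?Z')
      (k + int (sum_list rest) - int d + fls_subdegree (qpow True c) - fls_subdegree ?Z - fls_subdegree ?Z')"
    by (rule fls_agree_below_add_divide[OF qpow_subdegree(1) Z(1,3)])
  then show ?case
    using Z by (simp add: qpow_subdegree algebra_simps)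
qed auto

lemma qcf_agree_extension:
  assumes "even (length pre)" "\<forall>x\<in>set pre. x \<ge> 1" "c \<ge> 1"
    and "cs \<noteq> []" "\<forall>x\<in>set cs. x \<ge> 1"
  shows "fls_agree_below (qcf True (pre @ c # cs)) (qcf True (pre @ [c]))
           (int (sum_list pre) + int c + int (hd cs) - 1)"
proof -
  let ?Q = "qcf False cs"
  have Q: "?Q \<noteq> 0" "fls_subdegree ?Q \<le> 1 - int (hd cs)"
    using qcf_subdegree[of cs False] assms(4,5) by auto
  have U: "qcf True (c # cs) \<noteq> 0" "fls_subdegree (qcf True (c # cs)) = 0"
    and U': "qcf True [c] \<noteq> 0" "fls_subdegree (qcf True [c]) = 0"
    using qcf_subdegree[of "c # cs" True] qcf_subdegree[of "[c]" True] assms(3,5) by auto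
  have "qcf True (c # cs) - qcf True [c] = qpow True c / ?Q"
    using assms(4) by (cases cs) simp_all
  moreover have "fls_subdegree (qpow True c / ?Q) = int c - fls_subdegree ?Q"
    using Q by (simp add: qpow_subdegree fls_divide_subdegree)
  ultimately have "fls_agree_below (qcf True (c # cs)) (qcf True [c]) (int c + int (hd cs) - 1)"
    using Q by (simp add: fls_agree_below_iff_subdegree)
  from qcf_with_tail_agree[OF assms(1,2) U U' this]
  show ?thesis
    using qcf_append[of "c # cs" True pre] qcf_append[of "[c]" True pre] assms(1)
    by (simp add: algebra_simps)
qed

section \<open>q-deformed rationals between consecutive convergents\<close>

lemma qcf_snoc_1: "qcf b (l @ [c, 1]) = qcf b (l @ [c + 1])"
proof (induction l arbitrary: b)
  case Nil
  then show ?case by (simp add: qint_def qpow_def)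
next
  case (Cons x l)
  obtain y ys where "l @ [c, 1] = y # ys" by (cases "l @ [c, 1]") auto
  moreover obtain z zs where "l @ [c + 1] = z # zs" by (cases "l @ [c + 1]") auto
  ultimately show ?case
    using Cons by (metis append_Cons qcf.simps(3))
qed

lemma qrat_eq_qcf:
  assumes "l \<noteq> []" "even (length l)" "\<forall>c\<in>set l. c \<ge> 1" "cf_val l \<noteq> 1"
  shows "qrat (cf_val l) = qcf True l"
proof -
  have "(THE as. as \<noteq> [] \<and> even (length as) \<and> (\<forall>c\<in>set as. c \<ge> 1) \<and> cf_val as = cf_val l) = l"
    using assms(1-3) by (rule_tac the_equality) (auto intro: cf_val_inj)
  then show ?thesis
    using assms(4) by (simp add: qrat_def)
qed

lemma qrat_cf_val:
  assumes "l \<noteq> []" "\<forall>c\<in>set l. c \<ge> 1"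
  shows "qrat (cf_val l) = qcf True l"
proof (cases "cf_val l = 1")
  case True
  then have "l = [1]"
    using cf_val_eq_1 assms by blast
  then show ?thesis
    using True by (simp add: qrat_def qint_def)
next
  case ne1: False
  show ?thesis
  proof (cases "even (length l)")
    case True
    then show ?thesis using qrat_eq_qcf assms ne1 by blast
  next
    case odd: False
    obtain l0 c where l: "l = l0 @ [c]"
      using assms(1) by (cases l rule: rev_exhaust) auto
    show ?thesis
    proof (cases "c \<ge> 2")
      case True
      then have "l = l0 @ [c - 1 + 1]" "\<forall>x\<in>set (l0 @ [c - 1, 1]). x \<ge> 1"
        using assms(2) l by auto
      then show ?thesis
        using qrat_eq_qcf[of "l0 @ [c - 1, 1]"] cf_val_snoc_1[of l0] qcf_snoc_1[of True l0] odd ne1 l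
        by simp
    next
      case False
      then have "c = 1" using assms l by auto
      moreover have "l0 \<noteq> []" using calculation l ne1 by auto
      then obtain l1 d where "l0 = l1 @ [d]" by (cases l0 rule: rev_exhaust) auto
      ultimately have "l = l1 @ [d, 1]" "\<forall>x\<in>set (l1 @ [d + 1]). x \<ge> 1"
        using assms(2) l by auto
      then show ?thesis
        using qrat_eq_qcf[of "l1 @ [d + 1]"] cf_val_snoc_1[of l1] qcf_snoc_1[of True l1] odd ne1
        by simp
    qed
  qed
qed

lemma qrat_agree_below_extension:
  assumes "even (length pre)" "\<forall>x\<in>set pre. x \<ge> 1" "b \<ge> 1" "cs \<noteq> []" "\<forall>x\<in>set cs. x \<ge> 1"
  shows "fls_agree_below (qrat (cf_val (pre @ b # cs))) (qrat (cf_val (pre @ [b])))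
           (int (sum_list pre) + int b + int (hd cs) - 1)"
proof -
  have "qrat (cf_val (pre @ b # cs)) = qcf True (pre @ b # cs)"
    and "qrat (cf_val (pre @ [b])) = qcf True (pre @ [b])"
    using assms by (auto intro!: qrat_cf_val)
  with qcf_agree_extension[OF assms] show ?thesis
    by simp
qed

lemma qrat_agree_below_between:
  assumes pre: "even (length pre)" "\<forall>x\<in>set pre. x \<ge> 1" and "b \<ge> 1" "c \<ge> 1"
    and y: "cf_val (pre @ [b]) < y" "y < cf_val (pre @ [b, c])"
  shows "fls_agree_below (qrat y) (qrat (cf_val (pre @ [b]))) (int (sum_list pre) + int b + int c - 1)"
proof -
  let ?p = "pre @ [b]"
  have p: "?p \<noteq> []" "\<forall>x\<in>set ?p. x \<ge> 1"
    using pre \<open>b \<ge> 1\<close> by auto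
  have "cf_val (pre @ [b, c]) = cf_with_tail ?p (of_nat c)"
    using cf_val_append[of "[c]" ?p] by simp
  then obtain t where t: "t > of_nat c" "y = cf_with_tail ?p t"
    using between_cf_with_tail[OF p, of "of_nat c" y] y \<open>c \<ge> 1\<close> by auto
  then obtain cs where cs: "cs \<noteq> []" "\<forall>x\<in>set cs. x \<ge> 1" "cf_val cs = t" "hd cs = nat \<lfloor>t\<rfloor>"
    using cf_val_exists[of t] \<open>c \<ge> 1\<close> by auto
  have "c \<le> hd cs"
    using t(1) cs(4) by (simp add: le_nat_iff le_floor_iff)
  have "y = cf_val (pre @ b # cs)"
    using t(2) cf_val_append[OF cs(1), of ?p] cs(3) by simp
  with qrat_agree_below_extension[OF pre \<open>b \<ge> 1\<close> cs(1,2)] \<open>c \<le> hd cs\<close> show ?thesis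
    by (auto elim: fls_agree_below_mono)
qed

theorem lemma3p1:
  fixes a :: "nat \<Rightarrow> nat" and x :: real and m :: nat and y :: rat
  assumes a_pos: "\<forall>i\<ge>1. a i \<ge> 1"
    and x_gt: "x > 1"
    and x_irr: "x \<notin> \<rat>"
    and x_cf: "(\<lambda>n. real_of_rat (conv a n)) \<longlonglongrightarrow> x"
    and m_even: "even m" and m_ge: "m \<ge> 2"
    and y_lo: "conv a (m - 1) < y" and y_hi: "y < conv a m"
  shows "\<forall>j < (\<Sum>i=1..m. a i) - 1.
           fls_nth (qrat y) (int j) = fls_nth (qrat (conv a (m - 1))) (int j) \<and>
           fls_nth (qrat y) (int j) = fls_nth (qrat (conv a m)) (int j)"
proof -
  obtain k where m: "m = k + 2"
    using m_ge by (metis add.commute le_Suc_ex)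
  define pre where "pre = map a [1..<k+1]"
  have pre: "even (length pre)" "\<forall>x\<in>set pre. x \<ge> 1"
    using m_even a_pos m by (auto simp: pre_def)
  have b: "a (k + 1) \<ge> 1" and c: "a (k + 2) \<ge> 1"
    using a_pos by auto
  have conv: "conv a (m - 1) = cf_val (pre @ [a (k + 1)])" "conv a m = cf_val (pre @ [a (k + 1), a (k + 2)])"
    by (simp_all add: m conv_def pre_def)
  have "sum_list pre = (\<Sum>i=1..k. a i)"
    unfolding pre_def interv_sum_list_conv_sum_set_nat set_upt
    by (simp only: Suc_eq_plus1[symmetric] atLeastLessThanSuc_atLeastAtMost)
  then have "(\<Sum>i=1..m. a i) = sum_list pre + a (k + 1) + a (k + 2)"
    by (simp add: m sum.cl_ivl_Suc)
  then have y: "fls_agree_below (qrat y) (qrat (conv a (m - 1))) (int (\<Sum>i=1..m. a i) - 1)"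
    and xm: "fls_agree_below (qrat (conv a m)) (qrat (conv a (m - 1))) (int (\<Sum>i=1..m. a i) - 1)"
    using qrat_agree_below_between[OF pre b c, of y] qrat_agree_below_extension[OF pre b, of "[a (k + 2)]"]
      y_lo y_hi c conv by simp_all
  show ?thesis
  proof (intro allI impI)
    fix j
    assume "j < (\<Sum>i=1..m. a i) - 1"
    then have "int j < int (\<Sum>i=1..m. a i) - 1"
      by linarith
    with y xm show "fls_nth (qrat y) (int j) = fls_nth (qrat (conv a (m - 1))) (int j) \<and>
        fls_nth (qrat y) (int j) = fls_nth (qrat (conv a m)) (int j)"
      unfolding fls_agree_below_def by simp
  qed
qed

end
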